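(* Let $T:V\to V$ be a right-linear closed operator with two-sided linear domain, and let $q(s)=\sum_{j=0}^mb_js^j\not\equiv0$ be a polynomial with real coefficients $b_j$. If $q$ has no zeros in $\sigma_S(T)$, then the operator $q[T]:=\sum_{j=0}^mb_jT^j$, with domain $\operatorname{dom}(T^m)$, is a bijection from $\operatorname{dom}(T^m)$ onto $V$.
   Context: $\mathbb{H}$ denotes the quaternions, $V$ a two-sided Banach space over $\mathbb{H}$, $\mathcal{I}$ the identity. For a right-linear closed operator $T$ on $V$ and $s=s_0+s_1e_1+s_2e_2+s_3e_3\in\mathbb{H}$ with $|s|^2=s_0^2+s_1^2+s_2^2+s_3^2$, let $Q_s(T):=T^2-2s_0T+|s|^2\mathcal{I}$ with domain $\operatorname{dom}(T^2)$. The $S$-resolvent set is $\rho_S(T)=\{s\in\mathbb{H}: Q_s(T):\operatorname{dom}(T^2)\to V\text{ is bijective}\}$ and the $S$-spectrum is $\sigma_S(T)=\mathbb{H}\setminus\rho_S(T)$. *)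

theory Defs
  imports "HOL-Analysis.Analysis" "HOL-Computational_Algebra.Polynomial"
begin

datatype quat = Quat (qre: real) (qi: real) (qj: real) (qk: real)

instantiation quat :: ring_1
begin
definition "0 = Quat 0 0 0 0"
definition "1 = Quat 1 0 0 0"
definition "a + b = Quat (qre a + qre b) (qi a + qi b) (qj a + qj b) (qk a + qk b)"
definition "- a = Quat (- qre a) (- qi a) (- qj a) (- qk a)"
definition "a - b = Quat (qre a - qre b) (qi a - qi b) (qj a - qj b) (qk a - qk b)"
definition "a * b = Quat
   (qre a * qre b - qi a * qi b - qj a * qj b - qk a * qk b)
   (qre a * qi b + qi a * qre b + qj a * qk b - qk a * qj b)
   (qre a * qj b - qi a * qk b + qj a * qre b + qk a * qi b)
   (qre a * qk b + qi a * qj b - qj a * qi b + qk a * qre b)"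
instance
  by standard (auto simp: zero_quat_def one_quat_def plus_quat_def uminus_quat_def
      minus_quat_def times_quat_def algebra_simps quat.expand)
end

definition quat_of_real :: "real \<Rightarrow> quat" where
  "quat_of_real r = Quat r 0 0 0"

definition qnormsq :: "quat \<Rightarrow> real" where
  "qnormsq s = (qre s)\<^sup>2 + (qi s)\<^sup>2 + (qj s)\<^sup>2 + (qk s)\<^sup>2"

definition qnorm :: "quat \<Rightarrow> real" where
  "qnorm s = sqrt (qnormsq s)"

definition qpoly_eval :: "real poly \<Rightarrow> quat \<Rightarrow> quat" where
  "qpoly_eval q s = (\<Sum>j\<le>degree q. quat_of_real (coeff q j) * s ^ j)"

definition two_sided_qbanach :: "(quat \<Rightarrow> 'v::banach \<Rightarrow> 'v) \<Rightarrow> ('v \<Rightarrow> quat \<Rightarrow> 'v) \<Rightarrow> bool" where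
  "two_sided_qbanach lm rm \<longleftrightarrow>
     (\<forall>a b u. lm (a + b) u = lm a u + lm b u) \<and>
     (\<forall>a u w. lm a (u + w) = lm a u + lm a w) \<and>
     (\<forall>a b u. lm (a * b) u = lm a (lm b u)) \<and>
     (\<forall>u. lm 1 u = u) \<and>
     (\<forall>a b u. rm u (a + b) = rm u a + rm u b) \<and>
     (\<forall>a u w. rm (u + w) a = rm u a + rm w a) \<and>
     (\<forall>a b u. rm u (a * b) = rm (rm u a) b) \<and>
     (\<forall>u. rm u 1 = u) \<and>
     (\<forall>a b u. rm (lm a u) b = lm a (rm u b)) \<and>
     (\<forall>r u. lm (quat_of_real r) u = r *\<^sub>R u \<and> rm u (quat_of_real r) = r *\<^sub>R u) \<and>
     (\<forall>a u. norm (lm a u) \<le> qnorm a * norm u \<and> norm (rm u a) \<le> qnorm a * norm u)"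

text \<open>An (unbounded) operator is a map T together with its domain D.\<close>

definition two_sided_linear_subspace ::
  "(quat \<Rightarrow> 'v::banach \<Rightarrow> 'v) \<Rightarrow> ('v \<Rightarrow> quat \<Rightarrow> 'v) \<Rightarrow> 'v set \<Rightarrow> bool" where
  "two_sided_linear_subspace lm rm D \<longleftrightarrow>
     0 \<in> D \<and> (\<forall>u\<in>D. \<forall>w\<in>D. u + w \<in> D) \<and>
     (\<forall>u\<in>D. \<forall>a. lm a u \<in> D \<and> rm u a \<in> D)"

definition right_linear_op ::
  "('v::banach \<Rightarrow> quat \<Rightarrow> 'v) \<Rightarrow> 'v set \<Rightarrow> ('v \<Rightarrow> 'v) \<Rightarrow> bool" where
  "right_linear_op rm D T \<longleftrightarrow>
     (\<forall>u\<in>D. \<forall>w\<in>D. T (u + w) = T u + T w) \<and>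
     (\<forall>u\<in>D. \<forall>a. T (rm u a) = rm (T u) a)"

definition closed_op :: "'v::banach set \<Rightarrow> ('v \<Rightarrow> 'v) \<Rightarrow> bool" where
  "closed_op D T \<longleftrightarrow> closed {(u, T u) | u. u \<in> D}"

fun op_pow_dom :: "'v set \<Rightarrow> ('v \<Rightarrow> 'v) \<Rightarrow> nat \<Rightarrow> 'v set" where
  "op_pow_dom D T 0 = UNIV"
| "op_pow_dom D T (Suc n) = {u \<in> D. T u \<in> op_pow_dom D T n}"

definition Q_op :: "('v::banach \<Rightarrow> 'v) \<Rightarrow> quat \<Rightarrow> 'v \<Rightarrow> 'v" where
  "Q_op T s u = T (T u) - (2 * qre s) *\<^sub>R T u + qnormsq s *\<^sub>R u"

definition S_resolvent_set :: "'v::banach set \<Rightarrow> ('v \<Rightarrow> 'v) \<Rightarrow> quat set" where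
  "S_resolvent_set D T = {s. bij_betw (Q_op T s) (op_pow_dom D T 2) UNIV}"

definition S_spectrum :: "'v::banach set \<Rightarrow> ('v \<Rightarrow> 'v) \<Rightarrow> quat set" where
  "S_spectrum D T = UNIV - S_resolvent_set D T"

text \<open>q[T] = sum_j b_j T^j (to be considered on dom(T^m), m = degree q).\<close>
definition poly_op :: "real poly \<Rightarrow> ('v::banach \<Rightarrow> 'v) \<Rightarrow> 'v \<Rightarrow> 'v" where
  "poly_op q T u = (\<Sum>j\<le>degree q. coeff q j *\<^sub>R (T ^^ j) u)"

end

(*
  A complex root z of q yields the quaternion s = Re z + Im z e1 with q(s) = 0, so s lies in
  the S-resolvent set, and Q_s(T) is the operator of the real polynomial (X - z)(X - cnj z).
  Some real factor p of q of degree 1 or 2 divides this polynomial, and factors inherit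
  bijectivity: if (p r)[T] = p[T] r[T] is a bijection, then p[T] is onto V, and it is injective
  because p[T] x = 0 puts x into the domain of (r p)[T]. Conversely, if p[T] and r[T] are
  bijections, r[T] maps dom(T^(deg p + deg r)) bijectively onto dom(T^(deg p)), so (p r)[T] is
  a bijection, and induction on the degree of q concludes.
*)
theory Submission
  imports Defs "HOL-Computational_Algebra.Fundamental_Theorem_Algebra"
begin

lemma poly_op_eq_sum:
  "degree p \<le> N \<Longrightarrow> poly_op p T u = (\<Sum>k\<le>N. coeff p k *\<^sub>R (T ^^ k) u)"
  unfolding poly_op_def by (rule sum.mono_neutral_left) (auto simp: coeff_eq_0)

lemma poly_op_add: "poly_op (p + r) T u = poly_op p T u + poly_op r T u"
proof -
  define N where "N = max (degree p) (degree r)"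
  have "degree (p + r) \<le> N" "degree p \<le> N" "degree r \<le> N"
    using degree_add_le[of p N r] by (auto simp: N_def)
  then show ?thesis
    by (simp add: poly_op_eq_sum[of _ N] scaleR_add_left sum.distrib)
qed

lemma poly_op_smult: "poly_op (smult a p) T u = a *\<^sub>R poly_op p T u"
  by (simp add: poly_op_def scaleR_sum_right)

lemma poly_op_0 [simp]: "poly_op 0 T u = 0"
  by (simp add: poly_op_def)

lemma poly_op_const: "poly_op [:a:] T u = a *\<^sub>R u"
  by (simp add: poly_op_def)

lemma bij_betw_poly_op_degree_0:
  assumes "q \<noteq> 0" "degree q = 0"
  shows "bij_betw (poly_op q T) UNIV UNIV"
proof -
  have c: "coeff q 0 \<noteq> 0"
    using assms leading_coeff_neq_0[of q] by simp
  have "poly_op q T = scaleR (coeff q 0)"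
    using assms(2) by (simp add: poly_op_def fun_eq_iff)
  then show ?thesis
    using c by (auto intro!: bij_betw_byWitness[where f' = "scaleR (inverse (coeff q 0))"])
qed

lemma map_poly_of_real_add:
  "map_poly (of_real :: real \<Rightarrow> 'a::{comm_ring_1,real_algebra_1}) (p + q) =
    map_poly of_real p + map_poly of_real q"
  by (rule poly_eqI) (simp add: coeff_map_poly)

lemma map_poly_of_real_mult:
  "map_poly (of_real :: real \<Rightarrow> 'a::{comm_ring_1,real_algebra_1}) (p * q) =
    map_poly of_real p * map_poly of_real q"
  by (rule poly_eqI) (simp add: coeff_map_poly coeff_mult)

lemma poly_map_poly_of_real:
  "poly (map_poly of_real p) (of_real x) = (of_real (poly p x) :: 'a::{comm_ring_1,real_algebra_1})"
  by (induction p) (auto simp: map_poly_pCons)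

definition cnj_pair_poly :: "complex \<Rightarrow> real poly" where
  "cnj_pair_poly z = [:(cmod z)\<^sup>2, - 2 * Re z, 1:]"

lemma map_poly_cnj_pair_poly: "map_poly of_real (cnj_pair_poly z) = [:- z, 1:] * [:- cnj z, 1:]"
  by (simp add: cnj_pair_poly_def map_poly_pCons complex_eq_iff cmod_power2[unfolded power2_eq_square]
      power2_eq_square)

lemma degree_cnj_pair_poly [simp]: "degree (cnj_pair_poly z) = 2"
  by (simp add: cnj_pair_poly_def)

lemma cnj_pair_poly_nonzero [simp]: "cnj_pair_poly z \<noteq> 0"
  by (simp add: cnj_pair_poly_def)

lemma cnj_pair_poly_dvd:
  assumes "Im z \<noteq> 0" and root: "poly (map_poly of_real q) z = 0"
  shows "cnj_pair_poly z dvd q"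
proof -
  define p where "p = cnj_pair_poly z"
  define r where "r = q mod p"
  have "p \<noteq> 0"
    by (simp add: p_def)
  then have "degree r \<le> 1"
    using degree_mod_less[of p q] by (auto simp: r_def p_def)
  then have r: "r = [:coeff r 0, coeff r 1:]"
    by (intro poly_eqI) (auto simp: coeff_pCons coeff_eq_0 split: nat.split)
  have "poly (map_poly of_real p) z = 0"
    by (simp add: p_def map_poly_cnj_pair_poly)
  moreover have "q = q div p * p + r"
    by (simp add: r_def)
  ultimately have "poly (map_poly of_real r) z = 0"
    using root by (metis map_poly_of_real_add map_poly_of_real_mult poly_add poly_mult mult_zero_right add_0)
  then have "of_real (coeff r 0) + z * of_real (coeff r 1) = 0"
    by (subst (asm) r) (simp add: map_poly_pCons)
  then have "coeff r 0 = 0" "coeff r 1 = 0"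
    using assms(1) by (auto simp: complex_eq_iff)
  with r have "r = 0" by simp
  then show ?thesis
    by (simp add: r_def p_def mod_eq_0_iff_dvd)
qed

lemma real_poly_complex_root_factor:
  assumes root: "poly (map_poly of_real q) z = 0"
  obtains p where "p dvd q" "p dvd cnj_pair_poly z" "0 < degree p"
proof (cases "Im z = 0")
  case True
  then have "z = of_real (Re z)"
    by (simp add: complex_eq_iff)
  then have "poly q (Re z) = 0"
    using root poly_map_poly_of_real[of q "Re z"] by (metis of_real_eq_0_iff)
  then have "[:- Re z, 1:] dvd q"
    by (simp add: poly_eq_0_iff_dvd)
  moreover have "cnj_pair_poly z = [:- Re z, 1:] * [:- Re z, 1:]"
    using True by (simp add: cnj_pair_poly_def cmod_power2[unfolded power2_eq_square] power2_eq_square)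
  then have "[:- Re z, 1:] dvd cnj_pair_poly z"
    by (rule dvdI)
  ultimately show thesis
    using that[of "[:- Re z, 1:]"] by simp
next
  case False
  then show thesis
    using that[of "cnj_pair_poly z"] cnj_pair_poly_dvd root by simp
qed

locale real_linear_operator =
  fixes D :: "'v::banach set" and T :: "'v \<Rightarrow> 'v"
  assumes subspace_domain: "subspace D"
    and additive: "u \<in> D \<Longrightarrow> w \<in> D \<Longrightarrow> T (u + w) = T u + T w"
    and homogeneous: "u \<in> D \<Longrightarrow> T (c *\<^sub>R u) = c *\<^sub>R T u"
begin

abbreviation dom_pow :: "nat \<Rightarrow> 'v set" where
  "dom_pow n \<equiv> op_pow_dom D T n"

lemma T_zero: "T 0 = 0"
  using homogeneous[of 0 0] subspace_0[OF subspace_domain] by simp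

lemma T_diff: "u \<in> D \<Longrightarrow> w \<in> D \<Longrightarrow> T (u - w) = T u - T w"
  using additive[of u "- w"] homogeneous[of w "- 1"] subspace_neg[OF subspace_domain, of w]
  by simp

lemma T_sum:
  "(\<And>i. i \<in> I \<Longrightarrow> x i \<in> D) \<Longrightarrow> T (\<Sum>i\<in>I. c i *\<^sub>R x i) = (\<Sum>i\<in>I. c i *\<^sub>R T (x i))"
proof (induction I rule: infinite_finite_induct)
  case (insert i I)
  have "(\<Sum>i\<in>I. c i *\<^sub>R x i) \<in> D"
    using insert.prems by (intro subspace_sum subspace_scale subspace_domain) auto
  with insert show ?case
    by (simp add: additive homogeneous subspace_scale[OF subspace_domain])
qed (simp_all add: T_zero)

lemma dom_pow_add: "dom_pow (m + n) = {u \<in> dom_pow m. (T ^^ m) u \<in> dom_pow n}"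
  by (induction m) (auto simp: funpow_Suc_right simp del: funpow.simps(2))

lemma dom_pow_antimono: "m \<le> n \<Longrightarrow> dom_pow n \<subseteq> dom_pow m"
  using dom_pow_add[of m "n - m"] by auto

lemma funpow_in_dom_pow: "u \<in> dom_pow (k + n) \<Longrightarrow> i \<le> n \<Longrightarrow> (T ^^ i) u \<in> dom_pow k"
  using dom_pow_antimono[of "i + k" "k + n"] dom_pow_add[of i k] by auto

lemma funpow_in_domain: "u \<in> dom_pow n \<Longrightarrow> j < n \<Longrightarrow> (T ^^ j) u \<in> D"
  using funpow_in_dom_pow[of u 1 "n - 1" j] by simp

lemma subspace_dom_pow: "subspace (dom_pow n)"
proof (induction n)
  case (Suc n)
  have "dom_pow (Suc n) = D \<inter> {u. T u \<in> dom_pow n}" by auto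
  also have "subspace \<dots>"
    using Suc subspace_domain
    by (auto simp: subspace_def additive homogeneous T_zero)
  finally show ?case .
qed simp

lemma funpow_zero: "(T ^^ n) 0 = 0"
  by (induction n) (simp_all add: T_zero)

lemma funpow_diff:
  "u \<in> dom_pow n \<Longrightarrow> w \<in> dom_pow n \<Longrightarrow> (T ^^ n) (u - w) = (T ^^ n) u - (T ^^ n) w"
  by (induction n arbitrary: u w) (auto simp: funpow_Suc_right T_diff simp del: funpow.simps(2))

lemma funpow_sum:
  "(\<And>i. i \<in> I \<Longrightarrow> x i \<in> dom_pow n) \<Longrightarrow>
    (T ^^ n) (\<Sum>i\<in>I. c i *\<^sub>R x i) = (\<Sum>i\<in>I. c i *\<^sub>R (T ^^ n) (x i))"
proof (induction n arbitrary: x)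
  case (Suc n)
  then show ?case
    using Suc.IH[of "\<lambda>i. T (x i)"]
    by (simp add: funpow_Suc_right T_sum del: funpow.simps(2))
qed simp

lemma poly_op_zero_right: "poly_op p T 0 = 0"
  by (simp add: poly_op_def funpow_zero)

lemma poly_op_diff:
  assumes "u \<in> dom_pow (degree p)" "w \<in> dom_pow (degree p)"
  shows "poly_op p T (u - w) = poly_op p T u - poly_op p T w"
proof -
  have "(T ^^ k) (u - w) = (T ^^ k) u - (T ^^ k) w" if "k \<le> degree p" for k
    using assms dom_pow_antimono[OF that] by (intro funpow_diff) auto
  then show ?thesis
    by (simp add: poly_op_def scaleR_diff_right sum_subtractf)
qed

lemma poly_op_in_dom_pow: "u \<in> dom_pow (k + degree r) \<Longrightarrow> poly_op r T u \<in> dom_pow k"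
  unfolding poly_op_def
  by (intro subspace_sum subspace_scale subspace_dom_pow funpow_in_dom_pow) auto

lemma funpow_poly_op:
  assumes "u \<in> dom_pow (k + degree r)"
  shows "(T ^^ k) (poly_op r T u) = (\<Sum>i\<le>degree r. coeff r i *\<^sub>R (T ^^ (k + i)) u)"
proof -
  have "(T ^^ i) u \<in> dom_pow k" if "i \<in> {..degree r}" for i
    using assms that by (simp add: funpow_in_dom_pow)
  then show ?thesis
    unfolding poly_op_def by (subst funpow_sum) (simp_all add: funpow_add)
qed

lemma poly_op_pCons_0:
  "u \<in> dom_pow (degree (pCons 0 p)) \<Longrightarrow> poly_op (pCons 0 p) T u = T (poly_op p T u)"
proof (cases "p = 0")
  case False
  assume u: "u \<in> dom_pow (degree (pCons 0 p))"
  have "poly_op (pCons 0 p) T u = (\<Sum>i\<le>degree p. coeff p i *\<^sub>R (T ^^ Suc i) u)"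
    unfolding poly_op_def degree_pCons_eq[OF False] sum.atMost_Suc_shift
    by (simp del: funpow.simps(2))
  also have "\<dots> = (T ^^ 1) (poly_op p T u)"
    using u False by (subst funpow_poly_op) (simp_all del: funpow.simps(2))
  finally show ?thesis by simp
qed (simp add: T_zero)

lemma poly_op_mult:
  "u \<in> dom_pow (degree p + degree r) \<Longrightarrow> poly_op (p * r) T u = poly_op p T (poly_op r T u)"
proof (induction p arbitrary: u rule: pCons_induct)
  case (pCons a p)
  define v where "v = poly_op r T u"
  have deg_le: "degree (pCons 0 p) \<le> degree (pCons a p)"
    by simp
  have "degree (pCons 0 (p * r)) \<le> degree (pCons 0 p) + degree r"
    using degree_mult_le[of p r] by auto
  then have u: "u \<in> dom_pow (degree (pCons 0 (p * r)))"
    using pCons.prems deg_le dom_pow_antimono by (meson add_le_mono1 order_trans subsetD)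
  have "degree p + degree r \<le> degree (pCons a p) + degree r"
    by simp
  then have u_IH: "u \<in> dom_pow (degree p + degree r)"
    using pCons.prems dom_pow_antimono by blast
  have v: "v \<in> dom_pow (degree (pCons 0 p))"
    unfolding v_def using pCons.prems deg_le dom_pow_antimono
    by (intro poly_op_in_dom_pow) (meson add_le_mono1 subsetD)
  \<comment> \<open>Horner step: \<open>(a + X p) r = a r + X (p r)\<close>\<close>
  have "poly_op (pCons a p * r) T u = a *\<^sub>R v + T (poly_op (p * r) T u)"
    using u by (simp add: poly_op_add poly_op_smult poly_op_pCons_0 v_def)
  also have "poly_op (p * r) T u = poly_op p T v"
    unfolding v_def using u_IH by (rule pCons.IH)
  also have "a *\<^sub>R v + T (poly_op p T v) = poly_op ([:a:] + pCons 0 p) T v"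
    using v by (simp only: poly_op_add poly_op_const poly_op_pCons_0)
  finally show ?case by (simp add: v_def)
qed simp

lemma poly_op_in_dom_pow_iff:
  assumes "r \<noteq> 0" "u \<in> dom_pow (degree r)"
  shows "poly_op r T u \<in> dom_pow k \<longleftrightarrow> u \<in> dom_pow (k + degree r)"
proof
  show "poly_op r T u \<in> dom_pow k \<Longrightarrow> u \<in> dom_pow (k + degree r)"
  proof (induction k)
    case (Suc k)
    define d where "d = degree r"
    have u: "u \<in> dom_pow (k + d)"
      using Suc dom_pow_antimono[of k "Suc k"] by (auto simp: d_def)
    \<comment> \<open>all terms of \<open>T\<^sup>k (r[T] u)\<close> except the leading one already lie in \<open>D\<close>\<close>
    have "(T ^^ k) (poly_op r T u) \<in> D"
      using funpow_in_domain[OF Suc.prems, of k] by simp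
    moreover have "(T ^^ k) (poly_op r T u) =
        (\<Sum>i<d. coeff r i *\<^sub>R (T ^^ (k + i)) u) + lead_coeff r *\<^sub>R (T ^^ (k + d)) u"
      using funpow_poly_op[of u k r] u by (simp add: d_def lessThan_Suc_atMost[symmetric])
    moreover have "(\<Sum>i<d. coeff r i *\<^sub>R (T ^^ (k + i)) u) \<in> D"
      using u funpow_in_domain
      by (intro subspace_sum subspace_scale subspace_domain) auto
    ultimately have "lead_coeff r *\<^sub>R (T ^^ (k + d)) u \<in> D"
      using subspace_diff[OF subspace_domain] by fastforce
    then have "inverse (lead_coeff r) *\<^sub>R lead_coeff r *\<^sub>R (T ^^ (k + d)) u \<in> D"
      by (rule subspace_scale[OF subspace_domain])
    then have "(T ^^ (k + d)) u \<in> D"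
      using assms(1) by simp
    with u show ?case
      using dom_pow_add[of "k + d" 1] by (simp add: d_def)
  qed (use assms(2) in simp)
qed (rule poly_op_in_dom_pow)

lemma bij_betw_poly_op_dom_pow_shift:
  assumes "r \<noteq> 0" and bij: "bij_betw (poly_op r T) (dom_pow (degree r)) UNIV"
  shows "bij_betw (poly_op r T) (dom_pow (k + degree r)) (dom_pow k)"
proof -
  have "inj_on (poly_op r T) (dom_pow (k + degree r))"
    using bij dom_pow_antimono[of "degree r" "k + degree r"]
    by (auto simp: bij_betw_def intro: inj_on_subset)
  moreover have "poly_op r T ` dom_pow (k + degree r) = dom_pow k"
  proof
    show "poly_op r T ` dom_pow (k + degree r) \<subseteq> dom_pow k"
      using poly_op_in_dom_pow by auto
    show "dom_pow k \<subseteq> poly_op r T ` dom_pow (k + degree r)"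
    proof
      fix v assume v: "v \<in> dom_pow k"
      have "v \<in> poly_op r T ` dom_pow (degree r)"
        using bij by (simp add: bij_betw_imp_surj_on)
      then obtain u where "u \<in> dom_pow (degree r)" "v = poly_op r T u"
        by blast
      with v show "v \<in> poly_op r T ` dom_pow (k + degree r)"
        using poly_op_in_dom_pow_iff[OF assms(1)] by auto
    qed
  qed
  ultimately show ?thesis
    by (simp add: bij_betw_def)
qed

lemma bij_betw_poly_op_mult:
  assumes "p \<noteq> 0" "r \<noteq> 0"
    and "bij_betw (poly_op p T) (dom_pow (degree p)) UNIV"
    and "bij_betw (poly_op r T) (dom_pow (degree r)) UNIV"
  shows "bij_betw (poly_op (p * r) T) (dom_pow (degree (p * r))) UNIV"
proof -
  have "bij_betw (poly_op p T \<circ> poly_op r T) (dom_pow (degree p + degree r)) UNIV"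
    using bij_betw_poly_op_dom_pow_shift[OF assms(2,4)] assms(3) by (rule bij_betw_trans)
  moreover have "poly_op (p * r) T u = (poly_op p T \<circ> poly_op r T) u"
    if "u \<in> dom_pow (degree p + degree r)" for u
    using poly_op_mult[OF that] by simp
  ultimately have "bij_betw (poly_op (p * r) T) (dom_pow (degree p + degree r)) UNIV"
    using bij_betw_cong by blast
  then show ?thesis
    by (simp add: degree_mult_eq assms(1,2))
qed

lemma bij_betw_poly_op_factor:
  assumes "p dvd q" "q \<noteq> 0"
    and bij: "bij_betw (poly_op q T) (dom_pow (degree q)) UNIV"
  shows "bij_betw (poly_op p T) (dom_pow (degree p)) UNIV"
proof -
  obtain r where q: "q = p * r"
    using assms(1) by (rule dvdE)
  have "p \<noteq> 0" "r \<noteq> 0"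
    using assms(2) q by auto
  then have deg: "degree q = degree p + degree r"
    by (simp add: q degree_mult_eq)
  have zero: "0 \<in> dom_pow k" for k
    by (rule subspace_0[OF subspace_dom_pow])
  have "inj_on (poly_op p T) (dom_pow (degree p))"
  proof (rule inj_onI)
    fix u w
    assume u: "u \<in> dom_pow (degree p)" and w: "w \<in> dom_pow (degree p)"
      and eq: "poly_op p T u = poly_op p T w"
    define x where "x = u - w"
    have x: "x \<in> dom_pow (degree p)"
      unfolding x_def using u w by (rule subspace_diff[OF subspace_dom_pow])
    have px: "poly_op p T x = 0"
      unfolding x_def poly_op_diff[OF u w] eq by simp
    then have x_rp: "x \<in> dom_pow (degree r + degree p)"
      using poly_op_in_dom_pow_iff[OF \<open>p \<noteq> 0\<close> x, of "degree r"] zero by simp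
    then have "x \<in> dom_pow (degree q)"
      by (simp add: deg add.commute)
    moreover have "poly_op q T x = poly_op q T 0"
      using poly_op_mult[OF x_rp] px by (simp add: q mult.commute poly_op_zero_right)
    ultimately have "x = 0"
      using bij_betw_imp_inj_on[OF bij] zero by (blast dest: inj_onD)
    then show "u = w"
      by (simp add: x_def)
  qed
  moreover have "v \<in> poly_op p T ` dom_pow (degree p)" for v
  proof -
    have "v \<in> poly_op q T ` dom_pow (degree q)"
      using bij by (simp add: bij_betw_imp_surj_on)
    then obtain u where u: "u \<in> dom_pow (degree p + degree r)" and "v = poly_op q T u"
      by (auto simp: deg)
    then have "v = poly_op p T (poly_op r T u)"
      by (simp add: q poly_op_mult)
    with u show ?thesis
      using poly_op_in_dom_pow by blast
  qed
  ultimately show ?thesis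
    unfolding bij_betw_def by blast
qed

theorem bij_betw_poly_op_if_cnj_pair_poly_bij:
  assumes "q \<noteq> 0"
    and "\<And>z. poly (map_poly of_real q) z = 0 \<Longrightarrow>
      bij_betw (poly_op (cnj_pair_poly z) T) (dom_pow 2) UNIV"
  shows "bij_betw (poly_op q T) (dom_pow (degree q)) UNIV"
  using assms
proof (induction "degree q" arbitrary: q rule: less_induct)
  case less
  show ?case
  proof (cases "degree q = 0")
    case True
    then show ?thesis
      using bij_betw_poly_op_degree_0[OF less.prems(1)] by simp
  next
    case False
    then have "\<not> constant (poly (map_poly (of_real :: real \<Rightarrow> complex) q))"
      by (simp add: constant_degree degree_map_poly)
    then obtain z :: complex where z: "poly (map_poly of_real q) z = 0"
      using fundamental_theorem_of_algebra by blast
    obtain p where "p dvd q" and p_dvd: "p dvd cnj_pair_poly z" and "0 < degree p"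
      using real_poly_complex_root_factor[OF z] .
    have bij_p: "bij_betw (poly_op p T) (dom_pow (degree p)) UNIV"
      using bij_betw_poly_op_factor[OF p_dvd] less.prems(2)[OF z] by simp
    obtain r where q: "q = p * r"
      using \<open>p dvd q\<close> by (rule dvdE)
    have "p \<noteq> 0" "r \<noteq> 0"
      using less.prems(1) q by auto
    then have "degree r < degree q"
      using q \<open>0 < degree p\<close> by (simp add: degree_mult_eq)
    moreover note \<open>r \<noteq> 0\<close>
    moreover have "bij_betw (poly_op (cnj_pair_poly w) T) (dom_pow 2) UNIV"
      if "poly (map_poly of_real r) w = 0" for w
      using less.prems(2)[of w] that by (simp add: q map_poly_of_real_mult)
    ultimately have "bij_betw (poly_op r T) (dom_pow (degree r)) UNIV"
      by (rule less.hyps)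
    then show ?thesis
      using bij_betw_poly_op_mult[OF \<open>p \<noteq> 0\<close> \<open>r \<noteq> 0\<close> bij_p] by (simp add: q)
  qed
qed

end

definition quat_of_complex :: "complex \<Rightarrow> quat" where
  "quat_of_complex z = Quat (Re z) (Im z) 0 0"

lemma quat_of_complex_add: "quat_of_complex (x + y) = quat_of_complex x + quat_of_complex y"
  by (simp add: quat_of_complex_def plus_quat_def)

lemma quat_of_complex_mult: "quat_of_complex (x * y) = quat_of_complex x * quat_of_complex y"
  by (simp add: quat_of_complex_def times_quat_def)

lemma quat_of_complex_power: "quat_of_complex (x ^ n) = quat_of_complex x ^ n"
  by (induction n) (simp_all add: quat_of_complex_mult, simp add: quat_of_complex_def one_quat_def)

lemma quat_of_complex_sum: "quat_of_complex (sum f A) = (\<Sum>a\<in>A. quat_of_complex (f a))"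
  by (induction A rule: infinite_finite_induct)
    (simp_all add: quat_of_complex_add, simp_all add: quat_of_complex_def zero_quat_def)

lemma quat_of_complex_of_real: "quat_of_complex (of_real r) = quat_of_real r"
  by (simp add: quat_of_complex_def quat_of_real_def)

lemma quat_of_complex_eq_0_iff: "quat_of_complex z = 0 \<longleftrightarrow> z = 0"
  by (simp add: quat_of_complex_def zero_quat_def complex_eq_iff)

lemma qpoly_eval_quat_of_complex:
  "qpoly_eval q (quat_of_complex z) = quat_of_complex (poly (map_poly of_real q) z)"
  unfolding qpoly_eval_def poly_altdef
  by (simp add: degree_map_poly coeff_map_poly quat_of_complex_sum quat_of_complex_mult
      quat_of_complex_power quat_of_complex_of_real)

lemma Q_op_quat_of_complex: "Q_op T (quat_of_complex z) = poly_op (cnj_pair_poly z) T"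
  by (rule ext) (simp add: Q_op_def poly_op_def cnj_pair_poly_def quat_of_complex_def qnormsq_def
      cmod_power2[unfolded power2_eq_square] numeral_2_eq_2 algebra_simps)

lemma real_linear_operator_if_right_linear:
  assumes "two_sided_qbanach lm rm" "two_sided_linear_subspace lm rm D" "right_linear_op rm D T"
  shows "real_linear_operator D T"
proof
  have rm_real: "rm u (quat_of_real c) = c *\<^sub>R u" for u c
    using assms(1) by (simp add: two_sided_qbanach_def)
  show "subspace D"
    using assms(2) rm_real unfolding two_sided_linear_subspace_def subspace_def by metis
  show "T (u + w) = T u + T w" if "u \<in> D" "w \<in> D" for u w
    using assms(3) that by (simp add: right_linear_op_def)
  show "T (c *\<^sub>R u) = c *\<^sub>R T u" if "u \<in> D" for u c
    using assms(3) that rm_real by (metis right_linear_op_def)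
qed

theorem lemma3p11:
  fixes lm :: "quat \<Rightarrow> 'v::banach \<Rightarrow> 'v" and rm :: "'v \<Rightarrow> quat \<Rightarrow> 'v"
    and D :: "'v set" and T :: "'v \<Rightarrow> 'v" and q :: "real poly"
  assumes "two_sided_qbanach lm rm"
    and "two_sided_linear_subspace lm rm D"
    and "right_linear_op rm D T"
    and "closed_op D T"
    and "q \<noteq> 0"
    and "\<forall>s\<in>S_spectrum D T. qpoly_eval q s \<noteq> 0"
  shows "bij_betw (poly_op q T) (op_pow_dom D T (degree q)) UNIV"
proof -
  interpret real_linear_operator D T
    using assms(1-3) by (rule real_linear_operator_if_right_linear)
  have "bij_betw (poly_op (cnj_pair_poly z) T) (dom_pow 2) UNIV"
    if "poly (map_poly of_real q) z = 0" for z
  proof -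
    have "qpoly_eval q (quat_of_complex z) = 0"
      using that by (simp add: qpoly_eval_quat_of_complex quat_of_complex_eq_0_iff)
    then have "quat_of_complex z \<in> S_resolvent_set D T"
      using assms(6) by (auto simp: S_spectrum_def)
    then show ?thesis
      by (simp add: S_resolvent_set_def Q_op_quat_of_complex)
  qed
  with assms(5) show ?thesis
    by (rule bij_betw_poly_op_if_cnj_pair_poly_bij)
qed

end
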